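(* Let $G$ be a connected simple graph without bridges whose edge set is identified with $[d+1]$, let $B_1,\dots,B_n$ be the bases (spanning trees) of its graphic matroid, all of cardinality $k$, and let $P=\operatorname{tconv}(V)$ with $V=(-e_{B_1},\dots,-e_{B_n})$. Then: (1) the set of pseudovertices of $P$ is $\{-e_J: J=\bigcup_{i\in I}B_i \text{ for some } I\subseteq[n]\}$; (2) the set of pseudovertices of the tropical standard simplex $\Delta^d=\operatorname{tconv}\{-e_1,\dots,-e_{d+1}\}$ is $\{-e_J: J\subseteq[d+1],\ 1\le|J|\le d\}$; (3) let $(T^{(0)}_1,\dots,T^{(0)}_{d+1})=\operatorname{type}_V(\mathbf{0})$, and let $-e_J$ be a pseudovertex of $P$ with $[d+1]\setminus J=\{i_1,\dots,i_r\}$; then $\operatorname{type}_V(-e_J)=(T_1,\dots,T_{d+1})$ where $$T_j=\begin{cases}T^{(0)}_j\setminus\big(T^{(0)}_{i_1}\cup\cdots\cup T^{(0)}_{i_r}\big) & \text{if } j\in J,\\ T^{(0)}_j\cup\big((T^{(0)}_{i_1})^C\cap\cdots\cap(T^{(0)}_{i_r})^C\big) & \text{otherwise,}\end{cases}$$ with complements taken in $[n]$.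
   Context: Tropical arithmetic is min-plus; $\mathbb{T}^d=\mathbb{R}^{d+1}/\mathbb{R}(1,\dots,1)$; $\operatorname{tconv}\{v_1,\dots,v_n\}=\{\bigoplus_l\lambda_l\odot v_l:\lambda_l\in\mathbb{R}\}$; $e_J=\sum_{i\in J}e_i$, and $\mathbf{0}$ is the origin. For $m\in[d+1]$ let $\bar S_m=\{\xi\in\mathbb{T}^d:\xi_m=\min_i\xi_i\}$. For generators $V=(v_1,\dots,v_n)$ and $x\in\mathbb{T}^d$, $\operatorname{type}_V(x)=(T_1,\dots,T_{d+1})$ with $T_m=\{l\in[n]:v_l\in x+\bar S_m\}$. The cells $\{x:\operatorname{type}_V(x)=\mathcal{T}\}$ have closures forming a polyhedral subdivision $\mathcal{C}_V$ of $\mathbb{T}^d$ (the tropical complex); the pseudovertices of the tropical polytope $\operatorname{tconv}(V)$ are the zero-dimensional cells of $\mathcal{C}_V$. *)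

theory Defs
  imports "HOL-Analysis.Analysis"
begin

text \<open>Points of the tropical torus T^d = R^(d+1)/R(1,...,1) are represented by
  representatives in real^'e, where the finite type 'e plays the role of [d+1]
  (so d + 1 = CARD('e)).\<close>

definition ones :: "real^'e" where
  "ones = (\<chi> i. 1)"

definition tline :: "real^'e \<Rightarrow> (real^'e) set" where
  "tline p = {p + c *\<^sub>R ones | c. True}"

definition teq :: "real^'e \<Rightarrow> real^'e \<Rightarrow> bool" where
  "teq x y \<longleftrightarrow> (\<exists>c. x = y + c *\<^sub>R ones)"

definition eJ :: "'e set \<Rightarrow> real^'e" where
  "eJ J = (\<chi> i. if i \<in> J then 1 else 0)"

definition tconv :: "'i set \<Rightarrow> ('i \<Rightarrow> real^'e) \<Rightarrow> (real^'e::finite) set" where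
  "tconv L v = {x. \<exists>lam::'i \<Rightarrow> real. \<forall>i. x $ i = Min ((\<lambda>l. lam l + v l $ i) ` L)}"

definition Sbar :: "'e::finite \<Rightarrow> (real^'e) set" where
  "Sbar m = {\<xi>. \<xi> $ m = Min (range (\<lambda>i. \<xi> $ i))}"

definition ttype :: "'i set \<Rightarrow> ('i \<Rightarrow> real^'e) \<Rightarrow> real^'e \<Rightarrow> ('e::finite \<Rightarrow> 'i set)" where
  "ttype L v x = (\<lambda>m. {l \<in> L. v l \<in> (\<lambda>\<xi>. x + \<xi>) ` Sbar m})"

definition tcell :: "'i set \<Rightarrow> ('i \<Rightarrow> real^'e) \<Rightarrow> ('e::finite \<Rightarrow> 'i set) \<Rightarrow> (real^'e) set" where
  "tcell L v T = {x. ttype L v x = T}"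

definition tcomplex_cells :: "'i set \<Rightarrow> ('i \<Rightarrow> real^'e) \<Rightarrow> (real^'e::finite) set set" where
  "tcomplex_cells L v = {closure (tcell L v T) | T. tcell L v T \<noteq> {}}"

text \<open>Pseudovertices: zero-dimensional cells of C_V, i.e. cells which are a single point of T^d
  (a single line p + R(1,...,1) in the representation).\<close>
definition pseudovertex :: "'i set \<Rightarrow> ('i \<Rightarrow> real^'e) \<Rightarrow> real^'e::finite \<Rightarrow> bool" where
  "pseudovertex L v p \<longleftrightarrow> tline p \<in> tcomplex_cells L v"

text \<open>A graph with vertex set Vx and edge set UNIV :: 'e set; ends e is the set of endpoints.\<close>
definition simple_graph :: "'v set \<Rightarrow> ('e \<Rightarrow> 'v set) \<Rightarrow> bool" where
  "simple_graph Vx ends \<longleftrightarrow> finite Vx \<and> (\<forall>e. ends e \<subseteq> Vx \<and> card (ends e) = 2) \<and> inj ends"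

definition adj :: "('e \<Rightarrow> 'v set) \<Rightarrow> 'e set \<Rightarrow> ('v \<times> 'v) set" where
  "adj ends F = {(x, y). \<exists>e\<in>F. ends e = {x, y}}"

definition conn :: "('e \<Rightarrow> 'v set) \<Rightarrow> 'e set \<Rightarrow> 'v \<Rightarrow> 'v \<Rightarrow> bool" where
  "conn ends F x y \<longleftrightarrow> (x, y) \<in> (adj ends F)\<^sup>*"

definition connected_graph :: "'v set \<Rightarrow> ('e \<Rightarrow> 'v set) \<Rightarrow> bool" where
  "connected_graph Vx ends \<longleftrightarrow> Vx \<noteq> {} \<and> (\<forall>x\<in>Vx. \<forall>y\<in>Vx. conn ends UNIV x y)"

definition is_bridge :: "'v set \<Rightarrow> ('e \<Rightarrow> 'v set) \<Rightarrow> 'e \<Rightarrow> bool" where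
  "is_bridge Vx ends e \<longleftrightarrow>
     (\<exists>x\<in>Vx. \<exists>y\<in>Vx. conn ends UNIV x y \<and> \<not> conn ends (UNIV - {e}) x y)"

definition degree_in :: "('e \<Rightarrow> 'v set) \<Rightarrow> 'e set \<Rightarrow> 'v \<Rightarrow> nat" where
  "degree_in ends C x = card {e \<in> C. x \<in> ends e}"

definition is_cycle :: "('e::finite \<Rightarrow> 'v set) \<Rightarrow> 'e set \<Rightarrow> bool" where
  "is_cycle ends C \<longleftrightarrow> C \<noteq> {}
     \<and> (\<forall>x. degree_in ends C x = 0 \<or> degree_in ends C x = 2)
     \<and> (\<forall>x \<in> \<Union>(ends ` C). \<forall>y \<in> \<Union>(ends ` C). conn ends C x y)"

definition graphic_indep :: "('e::finite \<Rightarrow> 'v set) \<Rightarrow> 'e set \<Rightarrow> bool" where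
  "graphic_indep ends F \<longleftrightarrow> \<not> (\<exists>C \<subseteq> F. is_cycle ends C)"

definition graphic_basis :: "('e::finite \<Rightarrow> 'v set) \<Rightarrow> 'e set \<Rightarrow> bool" where
  "graphic_basis ends B \<longleftrightarrow> graphic_indep ends B \<and> (\<forall>F. B \<subset> F \<longrightarrow> \<not> graphic_indep ends F)"

end

theory Submission
  imports Defs
begin

text \<open>
  The type of x records, for every generator v_l, where v_l - x attains its minimum. A point
  is a pseudovertex iff these argmin sets form a connected hypergraph on the coordinates:
  otherwise raising one component by a small amount keeps the type. At the origin the
  argmin sets of the generators -e_B are the bases B themselves, connected because any two
  edges of a simple graph lie in a common spanning tree; the singleton generators of the
  standard simplex are disconnected there.
\<close>

definition argmins :: "real^'e::finite \<Rightarrow> 'e set" where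
  "argmins u = {m. \<forall>j. u$m \<le> u$j}"

definition hypergraph_connected :: "'e set set \<Rightarrow> bool" where
  "hypergraph_connected \<A> \<longleftrightarrow>
     (\<forall>K. (\<forall>A\<in>\<A>. A \<subseteq> K \<or> A \<inter> K = {}) \<longrightarrow> K = {} \<or> K = UNIV)"

lemma hypergraph_connected_closed_set:
  assumes "hypergraph_connected \<A>" and "k \<in> K"
    and "\<And>A i m. A \<in> \<A> \<Longrightarrow> i \<in> A \<Longrightarrow> m \<in> A \<Longrightarrow> i \<in> K \<Longrightarrow> m \<in> K"
  shows "K = UNIV"
proof -
  have "\<forall>A\<in>\<A>. A \<subseteq> K \<or> A \<inter> K = {}" using assms(3) by blast
  thus ?thesis using assms(1,2) unfolding hypergraph_connected_def by blast
qed

lemma hypergraph_connected_if_pairs_covered: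
  assumes "\<And>e f. \<exists>A\<in>\<A>. e \<in> A \<and> f \<in> A"
  shows "hypergraph_connected \<A>"
  unfolding hypergraph_connected_def
proof (intro allI impI)
  fix K assume sep: "\<forall>A\<in>\<A>. A \<subseteq> K \<or> A \<inter> K = {}"
  have False if "e \<in> K" "f \<notin> K" for e f
    using assms[of e f] sep that by blast
  thus "K = {} \<or> K = UNIV" by blast
qed

subsection \<open>Types and pseudovertices\<close>

lemma argmins_nonempty: "\<exists>m. m \<in> argmins (u::real^'e::finite)"
proof -
  have "Min (range (($) u)) \<in> range (($) u)" by (rule Min_in) auto
  then obtain m where "u$m = Min (range (($) u))" by (metis rangeE)
  hence "\<forall>j. u$m \<le> u$j" by simp
  thus ?thesis unfolding argmins_def by blast
qed

lemma argmins_diff_teq: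
  assumes "teq x p"
  shows "argmins (w - x) = argmins (w - p)"
proof -
  obtain c where "x = p + c *\<^sub>R ones" using assms by (auto simp: teq_def)
  thus ?thesis by (simp add: argmins_def ones_def)
qed

lemma Sbar_iff_argmins: "\<xi> \<in> Sbar m \<longleftrightarrow> m \<in> argmins \<xi>"
  unfolding Sbar_def argmins_def by (auto simp: eq_commute[of "\<xi>$m"] Min_eq_iff)

lemma ttype_argmins: "ttype L v x m = {l\<in>L. m \<in> argmins (v l - x)}"
proof -
  have "v l \<in> (\<lambda>\<xi>. x + \<xi>) ` Sbar m \<longleftrightarrow> v l - x \<in> Sbar m" for l
    by (metis (no_types, lifting) add_diff_cancel_left' diff_add_cancel image_iff)
  thus ?thesis by (simp add: ttype_def Sbar_iff_argmins)
qed

lemma ttype_eq_iff: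
  "ttype L v x = ttype L v y \<longleftrightarrow> (\<forall>l\<in>L. argmins (v l - x) = argmins (v l - y))"
  unfolding fun_eq_iff ttype_argmins by blast

lemma tline_eq_teq: "tline p = {x. teq x p}"
  by (auto simp: tline_def teq_def)

lemma closed_tline: "closed (tline p)"
proof -
  have "tline p = (+) p ` span {ones}"
    by (auto simp: tline_def span_singleton)
  thus ?thesis by (simp add: closed_translation closed_subspace)
qed

lemma pseudovertex_iff_type_determines:
  "pseudovertex L v p \<longleftrightarrow>
     (\<forall>x. (\<forall>l\<in>L. argmins (v l - x) = argmins (v l - p)) \<longrightarrow> teq x p)"
proof
  assume "pseudovertex L v p"
  then obtain T where T: "tline p = closure (tcell L v T)" "tcell L v T \<noteq> {}"
    unfolding pseudovertex_def tcomplex_cells_def by blast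
  hence "tcell L v T \<subseteq> tline p" using closure_subset by blast
  hence cell: "x \<in> tcell L v T \<Longrightarrow> teq x p" for x by (auto simp: tline_eq_teq)
  obtain q where q: "q \<in> tcell L v T" using T(2) by blast
  hence "ttype L v q = ttype L v p"
    using argmins_diff_teq[OF cell[OF q]] by (simp add: ttype_eq_iff)
  hence "T = ttype L v p" using q by (simp add: tcell_def)
  thus "\<forall>x. (\<forall>l\<in>L. argmins (v l - x) = argmins (v l - p)) \<longrightarrow> teq x p"
    using cell by (simp add: tcell_def ttype_eq_iff)
next
  assume det: "\<forall>x. (\<forall>l\<in>L. argmins (v l - x) = argmins (v l - p)) \<longrightarrow> teq x p"
  have "x \<in> tcell L v (ttype L v p) \<longleftrightarrow> teq x p" for x
    using det argmins_diff_teq[of x p] by (auto simp: tcell_def ttype_eq_iff)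
  hence cell: "tcell L v (ttype L v p) = tline p" by (simp add: tline_eq_teq set_eq_iff)
  have "p = p + 0 *\<^sub>R ones" by simp
  hence "tcell L v (ttype L v p) \<noteq> {}" unfolding cell tline_def by blast
  moreover have "tline p = closure (tcell L v (ttype L v p))"
    by (simp add: cell closure_closed closed_tline)
  ultimately show "pseudovertex L v p"
    unfolding pseudovertex_def tcomplex_cells_def by blast
qed

lemma type_determines_if_hypergraph_connected:
  assumes conn: "hypergraph_connected ((\<lambda>l. argmins (v l - p)) ` L)"
    and same: "\<forall>l\<in>L. argmins (v l - x) = argmins (v l - p)"
  shows "teq x p"
proof -
  define c where "c = x - p"
  obtain k where "k \<in> argmins (- c)" using argmins_nonempty by blast
  have "{i. c$i = c$k} = UNIV"
  proof (rule hypergraph_connected_closed_set[OF conn])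
    fix A i m assume "A \<in> (\<lambda>l. argmins (v l - p)) ` L" "i \<in> A" "m \<in> A" "i \<in> {i. c$i = c$k}"
    then obtain l where "l \<in> L" "i \<in> argmins (v l - p)" "m \<in> argmins (v l - p)" "c$i = c$k"
      by auto
    moreover from this have "i \<in> argmins (v l - x)" "m \<in> argmins (v l - x)" using same by auto
    ultimately have "(v l - p)$i = (v l - p)$m" "(v l - x)$i = (v l - x)$m" "c$i = c$k"
      unfolding argmins_def by (auto intro: antisym)
    thus "m \<in> {i. c$i = c$k}" by (simp add: c_def)
  qed simp
  have "x = p + (c$k) *\<^sub>R ones"
    unfolding vec_eq_iff
  proof
    fix i
    have "c$i = c$k" using \<open>{i. c$i = c$k} = UNIV\<close> by blast
    thus "x$i = (p + (c$k) *\<^sub>R ones)$i" by (simp add: ones_def c_def)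
  qed
  thus ?thesis by (auto simp: teq_def)
qed

lemma argmins_iff_le:
  assumes "a \<in> argmins u"
  shows "m \<in> argmins u \<longleftrightarrow> u$m \<le> u$a"
  using assms by (auto simp: argmins_def intro: order_trans)

lemma argmins_diff_small_eJ:
  assumes "0 < \<epsilon>" and split: "argmins u \<subseteq> K \<or> argmins u \<inter> K = {}"
    and gap: "\<And>i j. u$j < u$i \<Longrightarrow> \<epsilon> < u$i - u$j"
  shows "argmins (u - \<epsilon> *\<^sub>R eJ K) = argmins u"
proof -
  define w where "w = u - \<epsilon> *\<^sub>R eJ K"
  have w: "w$i = u$i - (if i \<in> K then \<epsilon> else 0)" for i
    by (simp add: w_def eJ_def)
  obtain a where a: "a \<in> argmins u" using argmins_nonempty by blast
  have low: "u$a \<le> u$i" for i using a by (simp add: argmins_def)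
  have far: "u$a + \<epsilon> < u$i" if "i \<notin> argmins u" for i
    using gap[of a i] low[of i] that argmins_iff_le[OF a] by force
  have "m \<in> argmins w \<longleftrightarrow> m \<in> argmins u" for m
    using split
  proof
    assume sub: "argmins u \<subseteq> K"
    hence "a \<in> K" using a by blast
    have "w$a \<le> w$j" for j using low[of j] \<open>0 < \<epsilon>\<close> \<open>a \<in> K\<close> by (auto simp: w)
    hence "a \<in> argmins w" by (simp add: argmins_def)
    hence "m \<in> argmins w \<longleftrightarrow> w$m \<le> u$a - \<epsilon>" using a sub by (auto simp: argmins_iff_le w)
    also have "\<dots> \<longleftrightarrow> m \<in> argmins u"
    proof -
      have "u$m \<le> u$a \<Longrightarrow> m \<in> K" using sub argmins_iff_le[OF a] by blast
      thus ?thesis using low[of m] \<open>0 < \<epsilon>\<close> by (auto simp: w argmins_iff_le[OF a])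
    qed
    finally show ?thesis .
  next
    assume disj: "argmins u \<inter> K = {}"
    have "a \<notin> K" using a disj by blast
    have "w$a \<le> w$j" for j
    proof (cases "j \<in> K")
      case True
      hence "j \<notin> argmins u" using disj by blast
      thus ?thesis using far[of j] True \<open>a \<notin> K\<close> by (simp add: w)
    next
      case False
      thus ?thesis using low[of j] \<open>a \<notin> K\<close> by (simp add: w)
    qed
    hence "a \<in> argmins w" by (simp add: argmins_def)
    hence "m \<in> argmins w \<longleftrightarrow> w$m \<le> u$a" using a disj by (auto simp: argmins_iff_le w)
    also have "\<dots> \<longleftrightarrow> m \<in> argmins u"
      using disj far[of m] \<open>0 < \<epsilon>\<close> by (auto simp: w argmins_iff_le[OF a])
    finally show ?thesis .
  qed
  thus ?thesis by (auto simp: w_def)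
qed

lemma hypergraph_connected_if_type_determines:
  assumes "finite L"
    and det: "\<forall>x. (\<forall>l\<in>L. argmins (v l - x) = argmins (v l - p)) \<longrightarrow> teq x p"
  shows "hypergraph_connected ((\<lambda>l. argmins (v l - p)) ` L)"
  unfolding hypergraph_connected_def
proof (intro allI impI)
  fix K assume split: "\<forall>A\<in>(\<lambda>l. argmins (v l - p)) ` L. A \<subseteq> K \<or> A \<inter> K = {}"
  show "K = {} \<or> K = UNIV"
  proof (rule ccontr)
    assume "\<not> (K = {} \<or> K = UNIV)"
    then obtain i0 j0 where i0: "i0 \<in> K" and j0: "j0 \<notin> K" by auto
    define gaps where "gaps = {d \<in> (\<lambda>(l, i, j). (v l - p)$i - (v l - p)$j) ` (L \<times> UNIV \<times> UNIV). 0 < d}"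
    have "finite gaps" using \<open>finite L\<close> by (simp add: gaps_def)
    define \<epsilon> where "\<epsilon> = Min (insert 1 gaps) / 2"
    have "0 < Min (insert 1 gaps)" using \<open>finite gaps\<close> by (simp add: gaps_def)
    hence "0 < \<epsilon>" by (simp add: \<epsilon>_def)
    have gap: "\<epsilon> < (v l - p)$i - (v l - p)$j" if "l \<in> L" "(v l - p)$j < (v l - p)$i" for l i j
    proof -
      have "(v l - p)$i - (v l - p)$j \<in> gaps" unfolding gaps_def using that by (auto intro!: image_eqI[where x="(l, i, j)"])
      hence "Min (insert 1 gaps) \<le> (v l - p)$i - (v l - p)$j" using \<open>finite gaps\<close> by simp
      thus ?thesis using \<open>0 < Min (insert 1 gaps)\<close> by (simp add: \<epsilon>_def)
    qed
    define x where "x = p + \<epsilon> *\<^sub>R eJ K"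
    have "argmins (v l - x) = argmins (v l - p)" if "l \<in> L" for l
    proof -
      have eq: "v l - x = (v l - p) - \<epsilon> *\<^sub>R eJ K" by (simp add: x_def algebra_simps)
      have "argmins (v l - p) \<subseteq> K \<or> argmins (v l - p) \<inter> K = {}"
        using split that by blast
      thus ?thesis unfolding eq by (rule argmins_diff_small_eJ[OF \<open>0 < \<epsilon>\<close> _ gap[OF that]])
    qed
    hence "teq x p" using det by blast
    then obtain c where "x = p + c *\<^sub>R ones" by (auto simp: teq_def)
    hence "x$i0 - p$i0 = x$j0 - p$j0" by (simp add: ones_def)
    moreover have "x$i0 - p$i0 = \<epsilon>" "x$j0 - p$j0 = 0" using i0 j0 by (auto simp: x_def eJ_def)
    ultimately show False using \<open>0 < \<epsilon>\<close> by simp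
  qed
qed

lemma pseudovertex_iff_hypergraph_connected:
  assumes "finite L"
  shows "pseudovertex L v p \<longleftrightarrow> hypergraph_connected ((\<lambda>l. argmins (v l - p)) ` L)"
  using pseudovertex_iff_type_determines type_determines_if_hypergraph_connected
    hypergraph_connected_if_type_determines[OF assms] by metis

lemma teq_right_cong:
  assumes "teq q p"
  shows "teq x q \<longleftrightarrow> teq x p"
proof -
  obtain c where q: "q = p + c *\<^sub>R ones" using assms by (auto simp: teq_def)
  have "x = q + a *\<^sub>R ones \<longleftrightarrow> x = p + (c + a) *\<^sub>R ones" for a
    by (simp add: q scaleR_add_left add.assoc)
  hence "teq x q \<longleftrightarrow> (\<exists>a. x = p + (c + a) *\<^sub>R ones)" by (simp add: teq_def)
  also have "\<dots> \<longleftrightarrow> teq x p" unfolding teq_def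
  proof
    assume "\<exists>a. x = p + (c + a) *\<^sub>R ones" thus "\<exists>b. x = p + b *\<^sub>R ones" by blast
  next
    assume "\<exists>b. x = p + b *\<^sub>R ones"
    then obtain b where "x = p + b *\<^sub>R ones" by blast
    thus "\<exists>a. x = p + (c + a) *\<^sub>R ones" by (intro exI[of _ "b - c"]) simp
  qed
  finally show ?thesis .
qed

lemma pseudovertex_teq:
  assumes "teq q p"
  shows "pseudovertex L v q \<longleftrightarrow> pseudovertex L v p"
  unfolding pseudovertex_iff_type_determines argmins_diff_teq[OF assms] teq_right_cong[OF assms] ..

lemma eJ_nth [simp]: "eJ J $ i = (if i \<in> J then 1 else 0)"
  by (simp add: eJ_def)

lemma eJ_empty [simp]: "eJ {} = 0"
  by (simp add: vec_eq_iff)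

lemma argmins_eJ_diff_eJ:
  assumes "B \<noteq> {}"
  shows "argmins (eJ J - eJ B) = (if B \<subseteq> J then B \<union> - J else B - J)"
proof (cases "B \<subseteq> J")
  case True
  obtain e where "e \<in> B" using assms by blast
  thus ?thesis using True by (auto simp: argmins_def split: if_splits)
next
  case False
  then obtain e where "e \<in> B" "e \<notin> J" by blast
  thus ?thesis using False by (auto simp: argmins_def split: if_splits)
qed

lemma argmins_neg_eJ:
  assumes "B \<noteq> {}"
  shows "argmins (- eJ B) = B"
  using argmins_eJ_diff_eJ[OF assms, of "{}"] assms by simp

lemma teq_neg_eJ_empty_or_UNIV:
  assumes "J = {} \<or> J = UNIV"
  shows "teq (- eJ J) 0"
  using assms by (auto simp: teq_def vec_eq_iff ones_def intro: exI[of _ "-1"])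

text \<open>Connectivity at -w forces w into two adjacent levels; then the coordinates at the
  upper level are exactly those covered by generators lying entirely inside it.\<close>
lemma teq_neg_eJ_union_if_hypergraph_connected:
  fixes p :: "real^'e::finite"
  assumes conn: "hypergraph_connected ((\<lambda>l. argmins (- eJ (b l) - p)) ` L)"
  shows "\<exists>I\<subseteq>L. teq p (- eJ (\<Union>i\<in>I. b i))"
proof -
  define w where "w = - p"
  let ?A = "\<lambda>l. argmins (- eJ (b l) - p)"
  have minimal: "w$m - (if m \<in> b l then 1 else 0) \<le> w$j - (if j \<in> b l then 1 else 0)"
    if "m \<in> ?A l" for m l j
  proof -
    have "(- eJ (b l) - p)$m \<le> (- eJ (b l) - p)$j" using that by (simp add: argmins_def)
    thus ?thesis by (simp add: w_def split: if_splits)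
  qed
  obtain z where "z \<in> argmins w" using argmins_nonempty by blast
  define \<mu> where "\<mu> = w$z"
  have above: "\<mu> \<le> w$i" for i using \<open>z \<in> argmins w\<close> by (simp add: argmins_def \<mu>_def)
  have below: "w$m - (if m \<in> b l then 1 else 0) \<le> \<mu>" if "m \<in> ?A l" for m l
    using minimal[OF that, of z] by (simp add: \<mu>_def split: if_splits)
  have "{i. w$i = \<mu> \<or> w$i = \<mu> + 1} = UNIV"
  proof (rule hypergraph_connected_closed_set[OF conn, of z])
    fix A i m assume "A \<in> ?A ` L" "i \<in> A" "m \<in> A" "i \<in> {i. w$i = \<mu> \<or> w$i = \<mu> + 1}"
    then obtain l where "i \<in> ?A l" "m \<in> ?A l" "w$i = \<mu> \<or> w$i = \<mu> + 1" by auto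
    with minimal[of i l m] minimal[of m l i] below[of i l] above[of m]
    show "m \<in> {i. w$i = \<mu> \<or> w$i = \<mu> + 1}" by (auto split: if_splits)
  qed (simp add: \<mu>_def)
  hence levels: "w$i = \<mu> \<or> w$i = \<mu> + 1" for i by blast
  define J where "J = {i. w$i = \<mu> + 1}"
  define I where "I = {l\<in>L. b l \<subseteq> J}"
  have "- J \<union> (\<Union>l\<in>I. b l) = UNIV"
  proof (rule hypergraph_connected_closed_set[OF conn, of z])
    fix A i m assume "A \<in> ?A ` L" "m \<in> A"
    then obtain l where "l \<in> L" "m \<in> ?A l" by auto
    show "m \<in> - J \<union> (\<Union>l\<in>I. b l)"
    proof (rule ccontr)
      assume m: "m \<notin> - J \<union> (\<Union>l\<in>I. b l)"
      hence "w$m = \<mu> + 1" by (simp add: J_def)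
      hence "m \<in> b l" using below[OF \<open>m \<in> ?A l\<close>] by (auto split: if_splits)
      hence "\<not> b l \<subseteq> J" using m \<open>l \<in> L\<close> by (auto simp: I_def)
      then obtain e where "e \<in> b l" "w$e = \<mu>" using levels by (auto simp: J_def)
      thus False using minimal[OF \<open>m \<in> ?A l\<close>, of e] \<open>m \<in> b l\<close> \<open>w$m = \<mu> + 1\<close> by simp
    qed
  qed (auto simp: J_def \<mu>_def)
  hence "(\<Union>l\<in>I. b l) = J" by (auto simp: I_def)
  moreover have "p = - eJ J + (- \<mu>) *\<^sub>R ones"
    unfolding vec_eq_iff
  proof
    fix i show "p$i = (- eJ J + (- \<mu>) *\<^sub>R ones)$i"
      using levels[of i] by (auto simp: J_def ones_def w_def)
  qed
  hence "teq p (- eJ J)" unfolding teq_def by blast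
  moreover have "I \<subseteq> L" by (simp add: I_def)
  ultimately show ?thesis by (intro exI[of _ I]) simp
qed

text \<open>The argmin sets of the generators in I all contain the complement of their union J,
  and together they cover everything.\<close>
lemma hypergraph_connected_at_neg_eJ_union:
  assumes "I \<subseteq> L" "I \<noteq> {}" and nonempty: "\<forall>l\<in>L. b l \<noteq> {}"
    and "(\<Union>i\<in>I. b i) \<noteq> UNIV"
  shows "hypergraph_connected ((\<lambda>l. argmins (eJ (\<Union>i\<in>I. b i) - eJ (b l))) ` L)"
  unfolding hypergraph_connected_def
proof (intro allI impI)
  define J where "J = (\<Union>i\<in>I. b i)"
  fix K assume split: "\<forall>A\<in>(\<lambda>l. argmins (eJ (\<Union>i\<in>I. b i) - eJ (b l))) ` L. A \<subseteq> K \<or> A \<inter> K = {}"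
  note split = split[folded J_def]
  have split_I: "b l \<union> - J \<subseteq> K \<or> (b l \<union> - J) \<inter> K = {}" if "l \<in> I" for l
  proof -
    have "b l \<noteq> {}" "b l \<subseteq> J" using that \<open>I \<subseteq> L\<close> nonempty by (auto simp: J_def)
    hence "argmins (eJ J - eJ (b l)) = b l \<union> - J" by (simp add: argmins_eJ_diff_eJ)
    moreover have "l \<in> L" using that \<open>I \<subseteq> L\<close> by blast
    ultimately show ?thesis using split by fastforce
  qed
  obtain j0 where "j0 \<notin> J" using assms(4) by (auto simp: J_def)
  have cover: "(\<Union>l\<in>I. b l \<union> - J) = UNIV" using \<open>I \<noteq> {}\<close> by (auto simp: J_def)
  show "K = {} \<or> K = UNIV"
  proof (cases "j0 \<in> K")
    case True
    hence "b l \<union> - J \<subseteq> K" if "l \<in> I" for l using split_I[OF that] \<open>j0 \<notin> J\<close> by blast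
    thus ?thesis using cover by blast
  next
    case False
    hence "(b l \<union> - J) \<inter> K = {}" if "l \<in> I" for l using split_I[OF that] \<open>j0 \<notin> J\<close> by blast
    thus ?thesis using cover by blast
  qed
qed

lemma pseudovertex_origin_iff:
  assumes "finite L" "\<forall>l\<in>L. b l \<noteq> {}"
  shows "pseudovertex L (\<lambda>l. - eJ (b l)) 0 \<longleftrightarrow> hypergraph_connected (b ` L)"
proof -
  have "(\<lambda>l. argmins (- eJ (b l) - 0)) ` L = b ` L"
    using assms(2) by (auto simp: argmins_neg_eJ image_iff)
  thus ?thesis by (simp add: pseudovertex_iff_hypergraph_connected[OF assms(1)])
qed

lemma pseudovertices_neg_eJ:
  assumes "finite L" and nonempty: "\<forall>l\<in>L. b l \<noteq> {}"
    and conn: "hypergraph_connected (b ` L)"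
  shows "pseudovertex L (\<lambda>l. - eJ (b l)) p \<longleftrightarrow> (\<exists>I\<subseteq>L. teq p (- eJ (\<Union>i\<in>I. b i)))"
proof
  assume "pseudovertex L (\<lambda>l. - eJ (b l)) p"
  thus "\<exists>I\<subseteq>L. teq p (- eJ (\<Union>i\<in>I. b i))"
    by (simp add: pseudovertex_iff_hypergraph_connected[OF \<open>finite L\<close>]
        teq_neg_eJ_union_if_hypergraph_connected)
next
  assume "\<exists>I\<subseteq>L. teq p (- eJ (\<Union>i\<in>I. b i))"
  then obtain I where I: "I \<subseteq> L" "teq p (- eJ (\<Union>i\<in>I. b i))" by blast
  have "pseudovertex L (\<lambda>l. - eJ (b l)) (- eJ (\<Union>i\<in>I. b i))"
  proof (cases "I = {} \<or> (\<Union>i\<in>I. b i) = UNIV")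
    case True
    hence "teq (- eJ (\<Union>i\<in>I. b i)) 0" by (intro teq_neg_eJ_empty_or_UNIV) auto
    thus ?thesis using pseudovertex_origin_iff[OF assms(1,2)] conn pseudovertex_teq by blast
  next
    case False
    thus ?thesis using hypergraph_connected_at_neg_eJ_union[OF I(1) _ nonempty]
      by (simp add: pseudovertex_iff_hypergraph_connected[OF \<open>finite L\<close>])
  qed
  thus "pseudovertex L (\<lambda>l. - eJ (b l)) p" using pseudovertex_teq[OF I(2)] by blast
qed

lemma pseudovertices_tropical_simplex:
  assumes "\<exists>e f::'e::finite. e \<noteq> f"
  shows "pseudovertex UNIV (\<lambda>i::'e. - eJ {i}) p \<longleftrightarrow>
    (\<exists>J. J \<noteq> {} \<and> J \<noteq> UNIV \<and> teq p (- eJ J))"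
proof
  assume pv: "pseudovertex UNIV (\<lambda>i::'e. - eJ {i}) p"
  then obtain J where J: "teq p (- eJ J)"
    using teq_neg_eJ_union_if_hypergraph_connected[of "\<lambda>i. {i}" p UNIV]
    by (auto simp: pseudovertex_iff_hypergraph_connected)
  have "J \<noteq> {} \<and> J \<noteq> UNIV"
  proof (rule ccontr)
    assume "\<not> (J \<noteq> {} \<and> J \<noteq> UNIV)"
    hence "teq (- eJ J) 0" by (intro teq_neg_eJ_empty_or_UNIV) auto
    hence "pseudovertex UNIV (\<lambda>i::'e. - eJ {i}) 0"
      using pv pseudovertex_teq[OF J] pseudovertex_teq by blast
    hence "hypergraph_connected (range (\<lambda>i::'e. {i}))"
      using pseudovertex_origin_iff[of "UNIV :: 'e set" "\<lambda>i. {i}"] by simp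
    moreover obtain e f :: 'e where "e \<noteq> f" using assms by blast
    moreover have "\<forall>A\<in>range (\<lambda>i::'e. {i}). A \<subseteq> {e} \<or> A \<inter> {e} = {}" by auto
    ultimately show False unfolding hypergraph_connected_def by blast
  qed
  thus "\<exists>J. J \<noteq> {} \<and> J \<noteq> UNIV \<and> teq p (- eJ J)" using J by blast
next
  assume "\<exists>J. J \<noteq> {} \<and> J \<noteq> UNIV \<and> teq p (- eJ J)"
  then obtain J where J: "J \<noteq> {}" "J \<noteq> UNIV" "teq p (- eJ J)" by blast
  have "pseudovertex UNIV (\<lambda>i::'e. - eJ {i}) (- eJ (\<Union>i\<in>J. {i}))"
    using hypergraph_connected_at_neg_eJ_union[of J UNIV "\<lambda>i. {i}"] J
    by (simp add: pseudovertex_iff_hypergraph_connected)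
  thus "pseudovertex UNIV (\<lambda>i::'e. - eJ {i}) p" using pseudovertex_teq[OF J(3)] by simp blast
qed

lemma ttype_neg_eJ:
  assumes "\<forall>l\<in>L. b l \<noteq> {}"
  shows "ttype L (\<lambda>l. - eJ (b l)) (- eJ J) =
         (\<lambda>j. let T0 = ttype L (\<lambda>l. - eJ (b l)) 0 in
            if j \<in> J then T0 j - (\<Union>i \<in> UNIV - J. T0 i)
            else T0 j \<union> (L \<inter> (\<Inter>i \<in> UNIV - J. L - T0 i)))"
proof -
  have "ttype L (\<lambda>l. - eJ (b l)) 0 j = {l\<in>L. j \<in> b l}" for j
    using assms by (auto simp: ttype_argmins argmins_neg_eJ)
  moreover have "ttype L (\<lambda>l. - eJ (b l)) (- eJ J) j =
      {l\<in>L. j \<in> (if b l \<subseteq> J then b l \<union> - J else b l - J)}" for j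
  proof -
    have "j \<in> argmins (- eJ (b l) - - eJ J) \<longleftrightarrow> j \<in> (if b l \<subseteq> J then b l \<union> - J else b l - J)"
      if "l \<in> L" for l
      using assms that by (simp add: argmins_eJ_diff_eJ)
    thus ?thesis unfolding ttype_argmins by blast
  qed
  ultimately show ?thesis by (auto simp: fun_eq_iff Let_def split: if_splits)
qed

subsection \<open>Graphic matroids\<close>

lemma bridgeless_two_edges:
  fixes ends :: "'e \<Rightarrow> 'v set"
  assumes "simple_graph Vx ends" and "\<forall>e. \<not> is_bridge Vx ends e"
  shows "\<exists>e f::'e. e \<noteq> f"
proof (rule ccontr)
  assume "\<not> (\<exists>e f::'e. e \<noteq> f)"
  hence single: "UNIV - {e} = {}" for e :: 'e by blast
  obtain e :: 'e where True by blast
  have "ends e \<subseteq> Vx" "card (ends e) = 2" using assms(1) by (auto simp: simple_graph_def)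
  then obtain x y where xy: "ends e = {x, y}" "x \<noteq> y" "x \<in> Vx" "y \<in> Vx"
    by (auto simp: card_2_iff)
  have "conn ends UNIV x y" using xy by (auto simp: conn_def adj_def)
  moreover have "\<not> conn ends (UNIV - {e}) x y"
    using xy by (simp add: single conn_def adj_def)
  ultimately have "is_bridge Vx ends e" using xy unfolding is_bridge_def by blast
  thus False using assms(2) by blast
qed

text \<open>Each endpoint of an edge g of a cycle C with at most two edges lies on every edge of C,
  so the ends of the other edge coincide with those of g.\<close>
lemma not_is_cycle_card_le_2:
  assumes "simple_graph Vx ends" and "card C \<le> 2"
  shows "\<not> is_cycle ends (C :: 'e::finite set)"
proof
  assume cyc: "is_cycle ends C"
  then obtain g where "g \<in> C" by (auto simp: is_cycle_def)
  have ends2: "card (ends c) = 2" and "inj ends" for c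
    using assms(1) by (auto simp: simple_graph_def)
  have all: "{c\<in>C. z \<in> ends c} = C \<and> card C = 2" if "z \<in> ends g" for z
  proof -
    have "card {c\<in>C. z \<in> ends c} \<noteq> 0" using \<open>g \<in> C\<close> that by auto
    hence "card {c\<in>C. z \<in> ends c} = 2"
      using cyc unfolding is_cycle_def degree_in_def by metis
    thus ?thesis using assms(2) card_seteq[of C "{c\<in>C. z \<in> ends c}"] by auto
  qed
  obtain z where "z \<in> ends g" using ends2[of g] by fastforce
  moreover obtain x y where "C = {x, y}" "x \<noteq> y" using all[OF \<open>z \<in> ends g\<close>] card_2_iff by metis
  ultimately obtain h where "h \<in> C" "h \<noteq> g" by blast
  have "ends g \<subseteq> ends h" using all \<open>h \<in> C\<close> by blast
  moreover have "finite (ends h)" using ends2[of h] by (intro card_ge_0_finite) simp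
  ultimately have "ends g = ends h" using ends2 card_subset_eq by metis
  thus False using \<open>inj ends\<close> \<open>h \<noteq> g\<close> by (simp add: inj_eq)
qed

lemma graphic_indep_card_le_2:
  assumes "simple_graph Vx ends" and "card F \<le> 2"
  shows "graphic_indep ends (F :: 'e::finite set)"
proof -
  have "\<not> is_cycle ends C" if "C \<subseteq> F" for C
    using card_mono[OF finite that] assms(2) by (intro not_is_cycle_card_le_2[OF assms(1)]) simp
  thus ?thesis unfolding graphic_indep_def by blast
qed

lemma graphic_indep_extends_to_basis:
  assumes "graphic_indep ends S"
  shows "\<exists>B. graphic_basis ends B \<and> S \<subseteq> B"
proof -
  obtain B where "B \<in> {X. graphic_indep ends X}" "S \<subseteq> B"
    "\<forall>X\<in>{X. graphic_indep ends X}. B \<subseteq> X \<longrightarrow> B = X"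
    using finite_has_maximal2[of "{X. graphic_indep ends X}" S] assms by auto
  hence "graphic_basis ends B" unfolding graphic_basis_def by blast
  thus ?thesis using \<open>S \<subseteq> B\<close> by blast
qed

lemma graphic_basis_nonempty:
  assumes "simple_graph Vx ends" and "graphic_basis ends B"
  shows "B \<noteq> {}"
proof
  assume "B = {}"
  have "graphic_indep ends {undefined}" by (rule graphic_indep_card_le_2[OF assms(1)]) simp
  thus False using assms(2) \<open>B = {}\<close> unfolding graphic_basis_def by blast
qed

lemma graphic_basis_contains_pair:
  assumes "simple_graph Vx ends"
  shows "\<exists>B. graphic_basis ends B \<and> e \<in> B \<and> f \<in> B"
  using graphic_indep_extends_to_basis[OF graphic_indep_card_le_2[OF assms, of "{e, f}"]]
  by (auto simp: card_insert_if)

theorem mainTheorem7: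
  fixes Vx :: "'v set" and ends :: "'e::finite \<Rightarrow> 'v set"
    and n :: nat and b :: "nat \<Rightarrow> 'e set"
  assumes simple: "simple_graph Vx ends"
    and conn: "connected_graph Vx ends"
    and bridgeless: "\<forall>e. \<not> is_bridge Vx ends e"
    and bases: "bij_betw b {1..n} {B. graphic_basis ends B}"
  defines "V \<equiv> (\<lambda>l. - eJ (b l))"
  shows
    "({p. pseudovertex {1..n} V p}
       = {p. \<exists>I \<subseteq> {1..n}. teq p (- eJ (\<Union>i\<in>I. b i))})
    \<and> ({p. pseudovertex (UNIV :: 'e set) (\<lambda>i. - eJ {i}) p}
       = {p. \<exists>J :: 'e set. J \<noteq> {} \<and> J \<noteq> UNIV \<and> teq p (- eJ J)})
    \<and> (\<forall>J. pseudovertex {1..n} V (- eJ J) \<longrightarrow>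
       ttype {1..n} V (- eJ J) =
         (\<lambda>j. let T0 = ttype {1..n} V 0 in
            if j \<in> J then T0 j - (\<Union>i \<in> UNIV - J. T0 i)
            else T0 j \<union> ({1..n} \<inter> (\<Inter>i \<in> UNIV - J. {1..n} - T0 i))))"
proof -
  have bases_eq: "b ` {1..n} = {B. graphic_basis ends B}"
    using bases by (simp add: bij_betw_def)
  have nonempty: "\<forall>l\<in>{1..n}. b l \<noteq> {}"
    using graphic_basis_nonempty[OF simple] bases_eq by blast
  have "hypergraph_connected (b ` {1..n})"
    using hypergraph_connected_if_pairs_covered graphic_basis_contains_pair[OF simple] bases_eq
    by (metis mem_Collect_eq)
  note pseudovertices = pseudovertices_neg_eJ[OF _ nonempty this]
  show ?thesis
    unfolding V_def
    using pseudovertices pseudovertices_tropical_simplex[OF bridgeless_two_edges[OF simple bridgeless]]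
      ttype_neg_eJ[OF nonempty]
    by (intro conjI Collect_cong allI impI) blast+
qed

end
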